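(* In the setting below, the quasi-cyclic code $C$ is Euclidean LCD if and only if all of the following hold: (I) $g(x)$ is self-reciprocal; (II) $l(x)$ is self-reciprocal; (III) $\gcd(t_{22}(x),g_{12}(x))=1$; (IV) $\gcd\big(r_{22}(x),\ g_{11}(x)\bar g_{11}(x)+g_{12}(x)\bar g_{12}(x)\big)=1$.
   Context: Let $q$ be a prime power, $F=\mathbb{F}_q$, $m\ge1$ with $\gcd(q,m)=1$, and $R=F[x]/\langle x^m-1\rangle$; elements of $R$ are represented by polynomials of degree $<m$ and identified with their coefficient vectors in $F^m$. A quasi-cyclic code of length $2m$ and index $2$ is an $R$-submodule $C\subseteq R^2$. The Euclidean inner product of $(a_1,a_2),(b_1,b_2)\in R^2$ is the sum of the standard dot products of the coefficient vectors of $a_1,b_1$ and of $a_2,b_2$; $C^{\perp_e}$ is the dual with respect to it, and $C$ is Euclidean LCD if $C\cap C^{\perp_e}=\{0\}$. For a nonzero polynomial $f$ of degree $k$, its reciprocal is $f^*(x)=x^kf(x^{-1})$; $f$ is self-reciprocal if $f^*=\alpha f$ for some $\alpha\in F$. For a polynomial $f$ of degree at most $m$, its transpose is $\bar f(x)=x^m f(x^{-1})$. Suppose $C$ is generated as an $R$-module by $(g_{11}(x),g_{12}(x))$ and $(0,g_{22}(x))$, where $g_{11},g_{12},g_{22}\in F[x]$ satisfy: $g_{11}\mid x^m-1$, $g_{22}\mid x^m-1$, $\deg g_{12}<\deg g_{22}$, and $g_{11}g_{22}\mid (x^m-1)g_{12}$. Define $g=\gcd(g_{11},g_{22})$, $l=(x^m-1)/\mathrm{lcm}(g_{11},g_{22})$,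 $g_{11}=g\,g_{11}'$, $g_{22}=g\,g_{22}'$, $r_{11}=\gcd(g_{11}',g_{11}'^* )$, $t_{11}=g_{11}'/r_{11}$, $r_{22}=\gcd(g_{22}',g_{22}'^* )$, $t_{22}=g_{22}'/r_{22}$. *)

theory Defs
  imports "HOL-Computational_Algebra.Computational_Algebra"
begin

definition xm1 :: "nat \<Rightarrow> 'a::comm_ring_1 poly" where
  "xm1 m = monom 1 m - 1"

text \<open>Elements of R = F[x]/(x^m-1), represented by polynomials of degree < m.\<close>
definition Rm :: "nat \<Rightarrow> 'a::field poly set" where
  "Rm m = {p. degree p < m}"

text \<open>The R-submodule of R^2 generated by (g11,g12) and (0,g22).\<close>
definition qc_code :: "nat \<Rightarrow> 'a::field poly \<Rightarrow> 'a poly \<Rightarrow> 'a poly \<Rightarrow> ('a poly \<times> 'a poly) set" where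
  "qc_code m g11 g12 g22 =
     {((a * g11) mod xm1 m, (a * g12 + b * g22) mod xm1 m) | a b. a \<in> Rm m \<and> b \<in> Rm m}"

definition euclid_ip :: "nat \<Rightarrow> 'a::field poly \<times> 'a poly \<Rightarrow> 'a poly \<times> 'a poly \<Rightarrow> 'a" where
  "euclid_ip m u v =
     (\<Sum>i<m. coeff (fst u) i * coeff (fst v) i) + (\<Sum>i<m. coeff (snd u) i * coeff (snd v) i)"

definition euclid_dual :: "nat \<Rightarrow> ('a::field poly \<times> 'a poly) set \<Rightarrow> ('a poly \<times> 'a poly) set" where
  "euclid_dual m C = {v. v \<in> Rm m \<times> Rm m \<and> (\<forall>c\<in>C. euclid_ip m v c = 0)}"

definition euclid_LCD :: "nat \<Rightarrow> ('a::field poly \<times> 'a poly) set \<Rightarrow> bool" where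
  "euclid_LCD m C \<longleftrightarrow> C \<inter> euclid_dual m C = {(0, 0)}"

text \<open>Reciprocal f^* = x^(deg f) f(1/x) is the library's reflect_poly.\<close>
definition self_reciprocal :: "'a::field poly \<Rightarrow> bool" where
  "self_reciprocal f \<longleftrightarrow> f \<noteq> 0 \<and> (\<exists>\<alpha>. reflect_poly f = smult \<alpha> f)"

text \<open>Transpose f-bar = x^m f(1/x), for degree f \<le> m.\<close>
definition transpose_poly :: "nat \<Rightarrow> 'a::field poly \<Rightarrow> 'a poly" where
  "transpose_poly m f = monom 1 (m - degree f) * reflect_poly f"

end

(*
  Identify R with polynomials modulo X = x^m - 1 and let J be the substitution x \<mapsto> x^(m-1),
  which is x \<mapsto> x\<inverse> in R. The inner product <u, v> is the constant coefficient of
  u\<^sub>1 J(v\<^sub>1) + u\<^sub>2 J(v\<^sub>2) mod X; testing against all shifts of the two generators shows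
  that (c\<^sub>1, c\<^sub>2) lies in the dual iff X divides c\<^sub>1 J(g\<^sub>1\<^sub>1) + c\<^sub>2 J(g\<^sub>1\<^sub>2) and c\<^sub>2 J(g\<^sub>2\<^sub>2).

  As gcd(q, m) = 1, X is squarefree, so C \<inter> C\<^sup>\<bottom> = 0 can be checked modulo each irreducible
  factor p of X separately, and modulo p we have p | J(y) iff the reciprocal p* divides y.
  If p divides g the local condition is vacuous; if p divides only g\<^sub>1\<^sub>1 it says that p* does
  not divide both g\<^sub>1\<^sub>2 and g\<^sub>2\<^sub>2; if p divides only g\<^sub>2\<^sub>2 it says that p does not divide
  g\<^sub>1\<^sub>1 J(g\<^sub>1\<^sub>1) + g\<^sub>1\<^sub>2 J(g\<^sub>1\<^sub>2), which is congruent to the polynomial in (IV), whenever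
  p | g\<^sub>1\<^sub>2 or p* | g\<^sub>2\<^sub>2; and if p divides l it says p* | l. Comparing these conditions at p
  and at p* over all factors yields exactly (I)-(IV).
*)

theory Submission
  imports Defs "HOL-Number_Theory.Residues"
begin

hide_const (open) up_ring.coeff up_ring.monom module.smult

section \<open>Arithmetic modulo \<open>x^m - 1\<close>\<close>

lemma xm1_nonzero: "m \<ge> 1 \<Longrightarrow> xm1 m \<noteq> (0::'a::field poly)"
proof
  assume "m \<ge> 1" "xm1 m = (0::'a poly)"
  then have "coeff (xm1 m) m = (0::'a)" by simp
  with \<open>m \<ge> 1\<close> show False by (simp add: xm1_def)
qed

lemma degree_xm1: "m \<ge> 1 \<Longrightarrow> degree (xm1 m :: 'a::field poly) = m"
proof -
  assume "m \<ge> 1"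
  have "xm1 m = monom (1::'a) m + (- 1)" by (simp add: xm1_def)
  also have "degree \<dots> = m"
    using \<open>m \<ge> 1\<close> by (subst degree_add_eq_left) (simp_all add: degree_monom_eq)
  finally show ?thesis .
qed

lemma coeff_xm1:
  "coeff (xm1 m :: 'a::field poly) i = (if i = m then 1 else 0) - (if i = 0 then 1 else 0)"
  unfolding xm1_def by (simp add: coeff_monom)

lemma monom_cong_1: "[monom (1::'a::field) m = 1] (mod xm1 m)"
  by (simp add: xm1_def cong_iff_dvd_diff)

lemma monom_mult_cong_1: "[monom (1::'a::field) (m * k) = 1] (mod xm1 m)"
proof -
  have "[monom (1::'a) m ^ k = 1 ^ k] (mod xm1 m)"
    by (intro cong_pow monom_cong_1)
  then show ?thesis by (simp add: monom_power mult.commute)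
qed

lemma monom_cong_monom_mod: "[monom (1::'a::field) n = monom 1 (n mod m)] (mod xm1 m)"
proof -
  have "[monom (1::'a) (m * (n div m)) * monom 1 (n mod m) = 1 * monom 1 (n mod m)] (mod xm1 m)"
    by (intro cong_mult monom_mult_cong_1 cong_refl)
  then show ?thesis by (simp add: mult_monom)
qed

lemma degree_mod_xm1: "m \<ge> 1 \<Longrightarrow> degree (a mod xm1 m :: 'a::field poly) < m"
  using degree_mod_less[OF xm1_nonzero, of m a] by (cases "a mod xm1 m = 0") (auto simp: degree_xm1)

lemma sum_monom_coeff_lessThan:
  fixes s :: "'a::comm_monoid_add poly"
  assumes "degree s < m"
  shows "(\<Sum>i<m. monom (coeff s i) i) = s"
proof -
  have "{..<m} = {..m - 1}" using assms by auto
  then show ?thesis using assms by (simp add: poly_as_sum_of_monoms')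
qed

lemma mod_xm1_eqI:
  fixes a b :: "'a::field poly"
  assumes "[a = b] (mod xm1 m)" "degree b < m" "m \<ge> 1"
  shows "a mod xm1 m = b"
  using assms by (simp add: cong_def mod_poly_less degree_xm1)

section \<open>The substitution \<open>x \<mapsto> x\<inverse>\<close>\<close>

text \<open>Modulo \<open>x^m - 1\<close> the monomial \<open>x^(m-1)\<close> is the inverse of \<open>x\<close>, so this is the
  substitution \<open>x \<mapsto> x\<inverse>\<close> of \<open>R\<close>.\<close>
definition subst_inv_x :: "nat \<Rightarrow> 'a::comm_semiring_1 poly \<Rightarrow> 'a poly" where
  "subst_inv_x m p = pcompose p (monom 1 (m - 1))"

lemma subst_inv_x_0 [simp]: "subst_inv_x m 0 = 0"
  by (simp add: subst_inv_x_def)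

lemma subst_inv_x_1 [simp]: "subst_inv_x m 1 = 1"
  by (simp add: subst_inv_x_def pcompose_1)

lemma subst_inv_x_mult: "subst_inv_x m (p * q) = subst_inv_x m p * subst_inv_x m q"
  for p q :: "'a::idom poly"
  by (simp add: subst_inv_x_def pcompose_mult)

lemma subst_inv_x_add: "subst_inv_x m (p + q) = subst_inv_x m p + subst_inv_x m q"
  by (simp add: subst_inv_x_def pcompose_add)

lemma subst_inv_x_diff: "subst_inv_x m (p - q) = subst_inv_x m p - subst_inv_x m q"
  for p q :: "'a::comm_ring_1 poly"
  by (simp add: subst_inv_x_def pcompose_diff)

lemma subst_inv_x_sum: "subst_inv_x m (sum f A) = (\<Sum>x\<in>A. subst_inv_x m (f x))"
  by (simp add: subst_inv_x_def pcompose_sum)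

lemma subst_inv_x_monom: "subst_inv_x m (monom c k) = monom c ((m - 1) * k)"
  for c :: "'a::idom"
proof -
  have "pcompose ([:0, 1:] ^ k) q = q ^ k" for q :: "'a poly"
    by (induction k) (simp_all add: pcompose_mult pcompose_1 pcompose_pCons)
  moreover have "monom c k = smult c ([:0, 1:] ^ k)" by (simp add: monom_altdef)
  ultimately show ?thesis
    by (simp add: subst_inv_x_def pcompose_smult monom_power smult_monom mult.commute)
qed

lemma xm1_dvd_subst_inv_x_xm1: "xm1 m dvd subst_inv_x m (xm1 m :: 'a::field poly)"
proof -
  have "subst_inv_x m (xm1 m :: 'a poly) = monom 1 (m * (m - 1)) - 1"
    by (simp add: xm1_def subst_inv_x_diff subst_inv_x_monom mult.commute monom_0 flip: one_pCons)
  then show ?thesis using monom_mult_cong_1 by (simp add: cong_iff_dvd_diff)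
qed

lemma subst_inv_x_cong:
  fixes p q :: "'a::field poly"
  assumes "[p = q] (mod xm1 m)"
  shows "[subst_inv_x m p = subst_inv_x m q] (mod xm1 m)"
proof -
  obtain k where "p - q = xm1 m * k" using assms by (auto simp: cong_iff_dvd_diff)
  then have "subst_inv_x m p - subst_inv_x m q = subst_inv_x m (xm1 m) * subst_inv_x m k"
    by (metis subst_inv_x_diff subst_inv_x_mult)
  then show ?thesis
    unfolding cong_iff_dvd_diff using xm1_dvd_subst_inv_x_xm1[of m] by (metis dvd_mult2)
qed

lemma subst_inv_x_mult_monom_cong_reflect:
  fixes y :: "'a::field poly"
  assumes "m \<ge> 1"
  shows "[subst_inv_x m y * monom 1 (degree y) = reflect_poly y] (mod xm1 m)"
proof (induction y)
  case (pCons a p)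
  show ?case
  proof (cases "p = 0")
    case True then show ?thesis by (simp add: subst_inv_x_def)
  next
    case False
    have x_inv: "monom 1 (m - 1) * monom 1 (Suc (degree p)) = monom 1 m * monom (1::'a) (degree p)"
      using assms by (simp add: mult_monom)
    have "subst_inv_x m (pCons a p) * monom 1 (degree (pCons a p))
        = monom a (Suc (degree p)) + monom 1 m * (subst_inv_x m p * monom 1 (degree p))"
      using False
      by (simp add: subst_inv_x_def pcompose_pCons algebra_simps smult_monom flip: x_inv)
    also have "[\<dots> = monom a (Suc (degree p)) + 1 * reflect_poly p] (mod xm1 m)"
      by (intro cong_add cong_mult cong_refl pCons monom_cong_1)
    also have "monom a (Suc (degree p)) + 1 * reflect_poly p = reflect_poly (pCons a p)"
      using False by (simp add: reflect_poly_pCons')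
    finally show ?thesis .
  qed
qed simp

lemma subst_inv_x_cong_transpose:
  fixes y :: "'a::field poly"
  assumes "m \<ge> 1" "degree y \<le> m"
  shows "[subst_inv_x m y = transpose_poly m y] (mod xm1 m)"
proof -
  have "[subst_inv_x m y * 1 = subst_inv_x m y * monom 1 m] (mod xm1 m)"
    by (intro cong_mult cong_refl cong_sym[OF monom_cong_1])
  also have "subst_inv_x m y * monom 1 m
      = monom 1 (m - degree y) * (subst_inv_x m y * monom 1 (degree y))"
    using assms(2) by (simp add: mult_monom algebra_simps)
  also have "[\<dots> = monom 1 (m - degree y) * reflect_poly y] (mod xm1 m)"
    by (intro cong_mult cong_refl subst_inv_x_mult_monom_cong_reflect assms(1))
  finally show ?thesis by (simp add: transpose_poly_def)
qed

section \<open>The inner product and the dual code\<close>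

lemma monom_mult_mod_xm1:
  fixes s :: "'a::field poly"
  assumes "m \<ge> 1" "degree s < m"
  shows "(monom 1 n * s) mod xm1 m = (\<Sum>i<m. monom (coeff s i) ((i + n) mod m))"
proof (rule mod_xm1_eqI[OF _ _ assms(1)])
  have "(\<Sum>i<m. monom (coeff s i) i) = s" using assms(2) by (rule sum_monom_coeff_lessThan)
  moreover have "monom 1 n * (\<Sum>i<m. monom (coeff s i) i)
      = (\<Sum>i<m. smult (coeff s i) (monom 1 (i + n)))"
    by (simp add: sum_distrib_left mult_monom smult_monom add.commute)
  ultimately have "monom 1 n * s = (\<Sum>i<m. smult (coeff s i) (monom 1 (i + n)))"
    by simp
  also have "[\<dots> = (\<Sum>i<m. smult (coeff s i) (monom 1 ((i + n) mod m)))] (mod xm1 m)"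
  proof (rule cong_sum)
    show "[smult c (monom 1 k) = smult c (monom 1 (k mod m))] (mod xm1 m)" for c :: 'a and k
      using cong_mult[OF cong_refl monom_cong_monom_mod, of "[:c:]" k m] by simp
  qed
  finally show "[monom 1 n * s = (\<Sum>i<m. monom (coeff s i) ((i + n) mod m))] (mod xm1 m)"
    by (simp add: smult_monom)
  show "degree (\<Sum>i<m. monom (coeff s i) ((i + n) mod m)) < m"
    using assms(1) by (intro degree_sum_less) (auto intro: le_less_trans[OF degree_monom_le])
qed

lemma coeff_0_monom_mult_mod_xm1:
  fixes s :: "'a::field poly"
  assumes "m \<ge> 1" "degree s < m" "j < m"
  shows "coeff ((monom 1 ((m - 1) * j) * s) mod xm1 m) 0 = coeff s j"
proof -
  have "(i + (m - 1) * j) mod m = 0 \<longleftrightarrow> i = j" if "i < m" for i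
  proof -
    have "i + (m - 1) * j + j = i + m * j" using assms(1) by (cases m) auto
    then have "[i + (m - 1) * j + j = i] (mod m)" by (simp add: cong_def add.assoc)
    then have "(i + (m - 1) * j) mod m = 0 \<longleftrightarrow> [j = i] (mod m)"
      by (metis add.left_neutral cong_add_rcancel_nat cong_def mod_0)
    then show ?thesis using that assms(3) by (auto simp: cong_def)
  qed
  then show ?thesis
    using assms by (simp add: monom_mult_mod_xm1 coeff_sum coeff_monom sum.If_cases)
qed

lemma subst_inv_x_as_sum:
  fixes b :: "'a::field poly"
  assumes "degree b < m"
  shows "subst_inv_x m b = (\<Sum>j<m. smult (coeff b j) (monom 1 ((m - 1) * j)))"
proof -
  have "(\<Sum>j<m. monom (coeff b j) j) = b" using assms by (rule sum_monom_coeff_lessThan)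
  moreover have "subst_inv_x m (\<Sum>j<m. monom (coeff b j) j)
      = (\<Sum>j<m. smult (coeff b j) (monom 1 ((m - 1) * j)))"
    by (simp add: subst_inv_x_sum subst_inv_x_monom smult_monom)
  ultimately show ?thesis by simp
qed

lemma sum_coeff_mult_eq_coeff_0_mod_xm1:
  fixes a b :: "'a::field poly"
  assumes "m \<ge> 1" "degree a < m" "degree b < m"
  shows "(\<Sum>i<m. coeff a i * coeff b i) = coeff ((a * subst_inv_x m b) mod xm1 m) 0"
proof -
  define rot where "rot j = (monom 1 ((m - 1) * j) * a) mod xm1 m" for j
  have "a * subst_inv_x m b = (\<Sum>j<m. smult (coeff b j) (monom 1 ((m - 1) * j) * a))"
    using assms(3) by (simp add: subst_inv_x_as_sum sum_distrib_left mult.commute)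
  also have "[\<dots> = (\<Sum>j<m. smult (coeff b j) (rot j))] (mod xm1 m)"
    unfolding rot_def
  proof (rule cong_sum)
    show "[smult c p = smult c (p mod xm1 m)] (mod xm1 m)" for c and p :: "'a poly"
      using cong_mult[OF cong_refl, of p "p mod xm1 m" "xm1 m" "[:c:]"] by (simp add: cong_def)
  qed
  finally have "(a * subst_inv_x m b) mod xm1 m = (\<Sum>j<m. smult (coeff b j) (rot j))"
  proof (rule mod_xm1_eqI[OF _ _ assms(1)])
    show "degree (\<Sum>j<m. smult (coeff b j) (rot j)) < m"
      using assms(1) unfolding rot_def
      by (intro degree_sum_less) (auto intro: le_less_trans[OF degree_smult_le] degree_mod_xm1)
  qed
  moreover have "coeff (rot j) 0 = coeff a j" if "j < m" for j
    unfolding rot_def using assms(1,2) that by (rule coeff_0_monom_mult_mod_xm1)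
  ultimately show ?thesis by (simp add: coeff_sum mult.commute)
qed

lemma euclid_ip_eq_coeff_0:
  fixes u v :: "'a::field poly \<times> 'a poly"
  assumes "m \<ge> 1" "u \<in> Rm m \<times> Rm m" "v \<in> Rm m \<times> Rm m"
  shows "euclid_ip m u v
    = coeff ((fst u * subst_inv_x m (fst v) + snd u * subst_inv_x m (snd v)) mod xm1 m) 0"
  using assms
  by (simp add: euclid_ip_def Rm_def mem_Times_iff poly_mod_add_left
      sum_coeff_mult_eq_coeff_0_mod_xm1)

lemma xm1_dvd_iff_coeff_0_monom_mult:
  fixes p :: "'a::field poly"
  assumes "m \<ge> 1"
  shows "xm1 m dvd p \<longleftrightarrow> (\<forall>k<m. coeff ((monom 1 ((m - 1) * k) * p) mod xm1 m) 0 = 0)"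
proof
  assume "xm1 m dvd p"
  then show "\<forall>k<m. coeff ((monom 1 ((m - 1) * k) * p) mod xm1 m) 0 = 0" by simp
next
  assume coeff_0: "\<forall>k<m. coeff ((monom 1 ((m - 1) * k) * p) mod xm1 m) 0 = 0"
  have "coeff (p mod xm1 m) k = 0" for k
  proof (cases "k < m")
    case True
    have "coeff (p mod xm1 m) k = coeff ((monom 1 ((m - 1) * k) * (p mod xm1 m)) mod xm1 m) 0"
      using coeff_0_monom_mult_mod_xm1[OF assms degree_mod_xm1[OF assms, of p] True] by simp
    also have "\<dots> = 0" using coeff_0 True by (simp add: mod_mult_right_eq)
    finally show ?thesis .
  next
    case False
    then show ?thesis using degree_mod_xm1[OF assms, of p] by (simp add: coeff_eq_0)
  qed
  then show "xm1 m dvd p" by (simp add: poly_eq_iff mod_eq_0_iff_dvd flip: mod_eq_0_iff_dvd)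
qed

lemma qc_code_codeword:
  fixes a b :: "'a::field poly"
  assumes "m \<ge> 1"
  shows "((a * g11) mod xm1 m, (a * g12 + b * g22) mod xm1 m) \<in> qc_code m g11 g12 g22"
proof -
  have "[(a mod xm1 m) * g12 + (b mod xm1 m) * g22 = a * g12 + b * g22] (mod xm1 m)"
    by (intro cong_add cong_mult cong_refl) (simp_all add: cong_def)
  then have "((a * g11) mod xm1 m, (a * g12 + b * g22) mod xm1 m)
      = (((a mod xm1 m) * g11) mod xm1 m, ((a mod xm1 m) * g12 + (b mod xm1 m) * g22) mod xm1 m)"
    by (simp add: cong_def mod_mult_left_eq)
  moreover have "a mod xm1 m \<in> Rm m" "b mod xm1 m \<in> Rm m"
    using degree_mod_xm1[OF assms] by (auto simp: Rm_def)
  ultimately show ?thesis unfolding qc_code_def by blast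
qed

lemma ball_qc_code_iff:
  fixes g11 g12 g22 :: "'a::field poly"
  assumes "m \<ge> 1"
  shows "(\<forall>c \<in> qc_code m g11 g12 g22. P c) \<longleftrightarrow>
    (\<forall>a b. P ((a * g11) mod xm1 m, (a * g12 + b * g22) mod xm1 m))"
proof
  assume "\<forall>c \<in> qc_code m g11 g12 g22. P c"
  then show "\<forall>a b. P ((a * g11) mod xm1 m, (a * g12 + b * g22) mod xm1 m)"
    using qc_code_codeword[OF assms] by blast
qed (auto simp: qc_code_def)

lemma euclid_ip_codeword:
  fixes a b c1 c2 :: "'a::field poly"
  assumes "m \<ge> 1" "(c1, c2) \<in> Rm m \<times> Rm m"
  shows "euclid_ip m (c1, c2) ((a * g11) mod xm1 m, (a * g12 + b * g22) mod xm1 m)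
    = coeff ((subst_inv_x m a * (c1 * subst_inv_x m g11 + c2 * subst_inv_x m g12)
              + subst_inv_x m b * (c2 * subst_inv_x m g22)) mod xm1 m) 0"
proof -
  let ?J = "subst_inv_x m"
  have "[c1 * ?J ((a * g11) mod xm1 m) + c2 * ?J ((a * g12 + b * g22) mod xm1 m)
       = c1 * ?J (a * g11) + c2 * ?J (a * g12 + b * g22)] (mod xm1 m)"
    by (intro cong_add cong_mult cong_refl subst_inv_x_cong) (simp_all add: cong_def)
  also have "c1 * ?J (a * g11) + c2 * ?J (a * g12 + b * g22)
      = ?J a * (c1 * ?J g11 + c2 * ?J g12) + ?J b * (c2 * ?J g22)"
    by (simp add: subst_inv_x_mult subst_inv_x_add algebra_simps)
  finally show ?thesis
    using assms by (subst euclid_ip_eq_coeff_0) (auto simp: cong_def Rm_def degree_mod_xm1)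
qed

lemma in_euclid_dual_qc_code_iff:
  fixes c1 c2 :: "'a::field poly"
  assumes "m \<ge> 1"
  shows "(c1, c2) \<in> euclid_dual m (qc_code m g11 g12 g22) \<longleftrightarrow>
    (c1, c2) \<in> Rm m \<times> Rm m \<and>
    xm1 m dvd c1 * subst_inv_x m g11 + c2 * subst_inv_x m g12 \<and>
    xm1 m dvd c2 * subst_inv_x m g22"
proof -
  let ?P = "c1 * subst_inv_x m g11 + c2 * subst_inv_x m g12"
  let ?Q = "c2 * subst_inv_x m g22"
  have "(\<forall>c\<in>qc_code m g11 g12 g22. euclid_ip m (c1, c2) c = 0) \<longleftrightarrow>
      (\<forall>a b. coeff ((subst_inv_x m a * ?P + subst_inv_x m b * ?Q) mod xm1 m) 0 = 0)"
    if "(c1, c2) \<in> Rm m \<times> Rm m"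
    using that assms by (simp add: ball_qc_code_iff euclid_ip_codeword)
  moreover have "(\<forall>a b. coeff ((subst_inv_x m a * ?P + subst_inv_x m b * ?Q) mod xm1 m) 0 = 0)
      \<longleftrightarrow> xm1 m dvd ?P \<and> xm1 m dvd ?Q"
  proof
    assume orth: "\<forall>a b. coeff ((subst_inv_x m a * ?P + subst_inv_x m b * ?Q) mod xm1 m) 0 = 0"
    have "coeff ((monom 1 ((m - 1) * k) * ?P) mod xm1 m) 0 = 0" for k
      using orth[rule_format, of "monom 1 k" 0]
      by (simp only: subst_inv_x_0 subst_inv_x_monom mult_zero_left add_0_right)
    moreover have "coeff ((monom 1 ((m - 1) * k) * ?Q) mod xm1 m) 0 = 0" for k
      using orth[rule_format, of 0 "monom 1 k"]
      by (simp only: subst_inv_x_0 subst_inv_x_monom mult_zero_left add_0_left)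
    ultimately show "xm1 m dvd ?P \<and> xm1 m dvd ?Q"
      unfolding xm1_dvd_iff_coeff_0_monom_mult[OF assms] by blast
  next
    assume "xm1 m dvd ?P \<and> xm1 m dvd ?Q"
    then show "\<forall>a b. coeff ((subst_inv_x m a * ?P + subst_inv_x m b * ?Q) mod xm1 m) 0 = 0"
      by simp
  qed
  ultimately show ?thesis unfolding euclid_dual_def by auto
qed

section \<open>The LCD property modulo a factor of \<open>x^m - 1\<close>\<close>

text \<open>Codewords are the pairs \<open>(u, v) = (a g\<^sub>1\<^sub>1, a g\<^sub>1\<^sub>2 + b g\<^sub>2\<^sub>2)\<close> reduced
  modulo \<open>x^m - 1\<close>, and the two divisibilities in the premise say that \<open>(u, v)\<close> lies in the
  dual code; \<open>lcd_mod\<close> reads this modulo a divisor \<open>p\<close> of \<open>x^m - 1\<close>.\<close>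
definition lcd_mod :: "nat \<Rightarrow> 'a::field poly \<Rightarrow> 'a poly \<Rightarrow> 'a poly \<Rightarrow> 'a poly \<Rightarrow> bool" where
  "lcd_mod m g11 g12 g22 p \<longleftrightarrow>
    (\<forall>a b. p dvd a * g11 * subst_inv_x m g11 + (a * g12 + b * g22) * subst_inv_x m g12 \<and>
           p dvd (a * g12 + b * g22) * subst_inv_x m g22 \<longrightarrow>
           p dvd a * g11 \<and> p dvd a * g12 + b * g22)"

lemma euclid_LCD_qc_code_iff_lcd_mod:
  fixes g11 g12 g22 :: "'a::field poly"
  assumes "m \<ge> 1"
  shows "euclid_LCD m (qc_code m g11 g12 g22) \<longleftrightarrow> lcd_mod m g11 g12 g22 (xm1 m)"
proof -
  let ?C = "qc_code m g11 g12 g22" and ?X = "xm1 m :: 'a poly" and ?J = "subst_inv_x m"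
  have in_dual_iff: "((a * g11) mod ?X, (a * g12 + b * g22) mod ?X) \<in> euclid_dual m ?C \<longleftrightarrow>
      ?X dvd a * g11 * ?J g11 + (a * g12 + b * g22) * ?J g12 \<and>
      ?X dvd (a * g12 + b * g22) * ?J g22" for a b
  proof -
    have "[(a * g11) mod ?X * ?J g11 + (a * g12 + b * g22) mod ?X * ?J g12
        = a * g11 * ?J g11 + (a * g12 + b * g22) * ?J g12] (mod ?X)"
      by (intro cong_add cong_mult cong_refl) (simp_all add: cong_def)
    moreover have "[(a * g12 + b * g22) mod ?X * ?J g22 = (a * g12 + b * g22) * ?J g22] (mod ?X)"
      by (intro cong_mult cong_refl) (simp add: cong_def)
    ultimately show ?thesis
      using assms by (auto simp: in_euclid_dual_qc_code_iff cong_dvd_iff Rm_def degree_mod_xm1)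
  qed
  have "(0, 0) \<in> ?C \<inter> euclid_dual m ?C"
    using in_dual_iff[of 0 0] qc_code_codeword[OF assms, of 0 g11 g12 0 g22] by simp
  then have "euclid_LCD m ?C \<longleftrightarrow> (\<forall>c \<in> ?C. c \<in> euclid_dual m ?C \<longrightarrow> c = (0, 0))"
    unfolding euclid_LCD_def by blast
  also have "\<dots> \<longleftrightarrow> lcd_mod m g11 g12 g22 ?X"
    using assms by (simp add: ball_qc_code_iff in_dual_iff lcd_mod_def mod_eq_0_iff_dvd)
  finally show ?thesis .
qed

lemma squarefree_dvdI:
  fixes s y :: "'a::factorial_semiring"
  assumes "squarefree s" "\<And>p. prime_elem p \<Longrightarrow> p dvd s \<Longrightarrow> p dvd y"
  shows "s dvd y"
proof (cases "y = 0")
  case False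
  have "s \<noteq> 0" using assms(1) by auto
  then show ?thesis
  proof (rule multiplicity_le_imp_dvd)
    fix p :: 'a assume "prime p"
    show "multiplicity p s \<le> multiplicity p y"
    proof (cases "p dvd s")
      case True
      then have "multiplicity p y \<ge> 1"
        using assms(2) \<open>prime p\<close> False by (simp add: multiplicity_gt_zero_iff Suc_le_eq)
      moreover have "multiplicity p s \<le> 1"
        using assms(1) \<open>s \<noteq> 0\<close> \<open>prime p\<close> squarefree_factorial_semiring'' by blast
      ultimately show ?thesis by linarith
    qed (simp add: not_dvd_imp_multiplicity_0)
  qed
qed simp

lemma lcd_mod_dvd:
  fixes p s :: "'a::field poly"
  assumes "lcd_mod m g11 g12 g22 s" "p dvd s" "s \<noteq> 0"
  shows "lcd_mod m g11 g12 g22 p"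
  unfolding lcd_mod_def
proof (intro allI impI)
  fix a b
  obtain h where s: "s = p * h" using assms(2) by blast
  have h: "h \<noteq> 0" using assms(3) s by auto
  have s_dvd_iff: "s dvd h * z \<longleftrightarrow> p dvd z" for z
    using h by (simp add: s mult.commute)
  assume "p dvd a * g11 * subst_inv_x m g11 + (a * g12 + b * g22) * subst_inv_x m g12 \<and>
    p dvd (a * g12 + b * g22) * subst_inv_x m g22"
  then have "s dvd (h * a) * g11 * subst_inv_x m g11
        + ((h * a) * g12 + (h * b) * g22) * subst_inv_x m g12 \<and>
      s dvd ((h * a) * g12 + (h * b) * g22) * subst_inv_x m g22"
    by (simp add: s_dvd_iff[symmetric] algebra_simps)
  then have "s dvd (h * a) * g11 \<and> s dvd (h * a) * g12 + (h * b) * g22"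
    using assms(1) unfolding lcd_mod_def by blast
  then show "p dvd a * g11 \<and> p dvd a * g12 + b * g22"
    by (simp add: s_dvd_iff[symmetric] algebra_simps)
qed

lemma lcd_mod_iff_prime_factors:
  fixes s :: "'a::field_gcd poly"
  assumes "squarefree s"
  shows "lcd_mod m g11 g12 g22 s \<longleftrightarrow>
    (\<forall>p. prime_elem p \<longrightarrow> p dvd s \<longrightarrow> lcd_mod m g11 g12 g22 p)"
proof
  assume "lcd_mod m g11 g12 g22 s"
  moreover have "s \<noteq> 0" using assms by auto
  ultimately show "\<forall>p. prime_elem p \<longrightarrow> p dvd s \<longrightarrow> lcd_mod m g11 g12 g22 p"
    using lcd_mod_dvd by blast
next
  assume local: "\<forall>p. prime_elem p \<longrightarrow> p dvd s \<longrightarrow> lcd_mod m g11 g12 g22 p"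
  show "lcd_mod m g11 g12 g22 s"
    unfolding lcd_mod_def
  proof (intro allI impI)
    fix a b
    assume rel: "s dvd a * g11 * subst_inv_x m g11 + (a * g12 + b * g22) * subst_inv_x m g12 \<and>
      s dvd (a * g12 + b * g22) * subst_inv_x m g22"
    have "p dvd a * g11 \<and> p dvd a * g12 + b * g22" if "prime_elem p" "p dvd s" for p
      using local that rel dvd_trans unfolding lcd_mod_def by meson
    then show "s dvd a * g11 \<and> s dvd a * g12 + b * g22"
      using squarefree_dvdI[OF assms] by blast
  qed
qed

lemma lcd_modD:
  assumes "lcd_mod m g11 g12 g22 p"
    "p dvd a * g11 * subst_inv_x m g11 + (a * g12 + b * g22) * subst_inv_x m g12"
    "p dvd (a * g12 + b * g22) * subst_inv_x m g22"
  shows "p dvd a * g11" "p dvd a * g12 + b * g22"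
  using assms unfolding lcd_mod_def by blast+

lemma lcd_mod_if_dvd_generators:
  fixes p :: "'a::field poly"
  assumes "p dvd g11" "p dvd g12" "p dvd g22"
  shows "lcd_mod m g11 g12 g22 p"
  using assms by (simp add: lcd_mod_def)

lemma lcd_mod_iff_dvd_only_g11:
  fixes p :: "'a::field poly"
  assumes "prime_elem p" "p dvd g11" "\<not> p dvd g22"
  shows "lcd_mod m g11 g12 g22 p \<longleftrightarrow>
    \<not> (p dvd subst_inv_x m g12 \<and> p dvd subst_inv_x m g22)"
proof
  assume "lcd_mod m g11 g12 g22 p"
  then show "\<not> (p dvd subst_inv_x m g12 \<and> p dvd subst_inv_x m g22)"
    using lcd_modD(2)[of m g11 g12 g22 p 0 1] assms(3) by auto
next
  assume J: "\<not> (p dvd subst_inv_x m g12 \<and> p dvd subst_inv_x m g22)"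
  show "lcd_mod m g11 g12 g22 p"
    unfolding lcd_mod_def
  proof (intro allI impI)
    fix a b
    let ?v = "a * g12 + b * g22"
    assume rel: "p dvd a * g11 * subst_inv_x m g11 + ?v * subst_inv_x m g12 \<and>
      p dvd ?v * subst_inv_x m g22"
    have "p dvd a * g11" using assms(2) by simp
    then have "p dvd ?v * subst_inv_x m g12"
      using rel dvd_add_right_iff dvd_mult2 by blast
    then have "p dvd ?v" using rel J assms(1) by (auto simp: prime_elem_dvd_mult_iff)
    with \<open>p dvd a * g11\<close> show "p dvd a * g11 \<and> p dvd ?v" ..
  qed
qed

lemma lcd_mod_iff_dvd_only_g22:
  fixes p :: "'a::field poly"
  assumes "prime_elem p" "\<not> p dvd g11" "p dvd g22"
  shows "lcd_mod m g11 g12 g22 p \<longleftrightarrow>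
    \<not> (p dvd g11 * subst_inv_x m g11 + g12 * subst_inv_x m g12 \<and> p dvd g12 * subst_inv_x m g22)"
proof
  assume "lcd_mod m g11 g12 g22 p"
  then show "\<not> (p dvd g11 * subst_inv_x m g11 + g12 * subst_inv_x m g12 \<and>
      p dvd g12 * subst_inv_x m g22)"
    using lcd_modD(1)[of m g11 g12 g22 p 1 0] assms(2) by auto
next
  let ?S = "g11 * subst_inv_x m g11 + g12 * subst_inv_x m g12"
  assume S: "\<not> (p dvd ?S \<and> p dvd g12 * subst_inv_x m g22)"
  show "lcd_mod m g11 g12 g22 p"
    unfolding lcd_mod_def
  proof (intro allI impI)
    fix a b
    let ?v = "a * g12 + b * g22"
    assume rel: "p dvd a * g11 * subst_inv_x m g11 + ?v * subst_inv_x m g12 \<and>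
      p dvd ?v * subst_inv_x m g22"
    have "a * g11 * subst_inv_x m g11 + ?v * subst_inv_x m g12
        = a * ?S + g22 * (b * subst_inv_x m g12)"
      by (simp add: algebra_simps)
    then have "p dvd a * ?S"
      using rel assms(3) dvd_add_left_iff dvd_mult2 by metis
    moreover have "?v * subst_inv_x m g22
        = a * (g12 * subst_inv_x m g22) + g22 * (b * subst_inv_x m g22)"
      by (simp add: algebra_simps)
    then have "p dvd a * (g12 * subst_inv_x m g22)"
      using rel assms(3) dvd_add_left_iff dvd_mult2 by metis
    ultimately have "p dvd a" using S assms(1) by (auto simp: prime_elem_dvd_mult_iff)
    then show "p dvd a * g11 \<and> p dvd ?v" using assms(3) by simp
  qed
qed

lemma lcd_mod_iff_coprime_generators:
  fixes p :: "'a::field poly"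
  assumes "prime_elem p" "\<not> p dvd g11" "\<not> p dvd g22"
  shows "lcd_mod m g11 g12 g22 p \<longleftrightarrow> \<not> p dvd subst_inv_x m g11 \<and> \<not> p dvd subst_inv_x m g22"
proof
  let ?J = "subst_inv_x m"
  have not_dvd_g11_g22: "\<not> p dvd g11 * g22" using assms by (simp add: prime_elem_dvd_mult_iff)
  assume lcd: "lcd_mod m g11 g12 g22 p"
  show "\<not> p dvd ?J g11 \<and> \<not> p dvd ?J g22"
  proof (intro conjI notI)
    assume "p dvd ?J g11"
    then show False
      using lcd_modD(1)[OF lcd, of g22 "- g12"] not_dvd_g11_g22 by (simp add: mult.commute)
  next
    assume J22: "p dvd ?J g22"
    show False
    proof (cases "p dvd ?J g11 \<and> p dvd ?J g12")
      case True
      then show False using lcd_modD(1)[OF lcd, of 1 0] J22 assms(2) by simp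
    next
      case False
      \<comment> \<open>\<open>(u, v)\<close> is a multiple of \<open>(J g\<^sub>1\<^sub>2, - J g\<^sub>1\<^sub>1)\<close>, which lies in the dual modulo \<open>p\<close>\<close>
      define a where "a = g22 * ?J g12"
      define b where "b = - (g11 * ?J g11 + g12 * ?J g12)"
      have orth: "a * g11 * ?J g11 + (a * g12 + b * g22) * ?J g12 = 0"
        and v: "a * g12 + b * g22 = - (g11 * g22 * ?J g11)"
        by (simp_all add: a_def b_def algebra_simps)
      have R1: "p dvd a * g11 * ?J g11 + (a * g12 + b * g22) * ?J g12" unfolding orth by simp
      have R2: "p dvd (a * g12 + b * g22) * ?J g22" using J22 by simp
      have "p dvd g11 * g22 * ?J g12"
        using lcd_modD(1)[OF lcd R1 R2] by (simp add: a_def ac_simps)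
      moreover have "p dvd g11 * g22 * ?J g11"
        using lcd_modD(2)[OF lcd R1 R2] by (simp add: v)
      ultimately show False
        using False not_dvd_g11_g22 assms(1) by (auto simp: prime_elem_dvd_mult_iff)
    qed
  qed
next
  assume J: "\<not> p dvd subst_inv_x m g11 \<and> \<not> p dvd subst_inv_x m g22"
  show "lcd_mod m g11 g12 g22 p"
    unfolding lcd_mod_def
  proof (intro allI impI)
    fix a b
    let ?v = "a * g12 + b * g22"
    assume rel: "p dvd a * g11 * subst_inv_x m g11 + ?v * subst_inv_x m g12 \<and>
      p dvd ?v * subst_inv_x m g22"
    then have "p dvd ?v" using J assms(1) by (auto simp: prime_elem_dvd_mult_iff)
    then have "p dvd a * g11 * subst_inv_x m g11"
      using rel dvd_add_left_iff dvd_mult2 by blast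
    then show "p dvd a * g11 \<and> p dvd ?v"
      using J assms(1) \<open>p dvd ?v\<close> by (auto simp: prime_elem_dvd_mult_iff)
  qed
qed

section \<open>Prime factors of \<open>x^m - 1\<close> and reciprocals\<close>

lemma dvd_reflect_poly_iff:
  fixes f y :: "'a::field poly"
  assumes "coeff f 0 \<noteq> 0"
  shows "f dvd reflect_poly y \<longleftrightarrow> reflect_poly f dvd y"
proof
  assume "f dvd reflect_poly y"
  then show "reflect_poly f dvd y"
  proof (induction y)
    case (pCons a p)
    show ?case
    proof (cases "a = 0")
      case False
      then have "reflect_poly f dvd reflect_poly (reflect_poly (pCons a p))"
        using pCons.prems by (metis dvd_def reflect_poly_mult)
      with False show ?thesis by simp
    next
      case True
      then have "pCons a p = [:0, 1:] * p" by simp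
      moreover have "reflect_poly [:0, 1::'a:] = 1" by (simp add: reflect_poly_def)
      then have "reflect_poly ([:0, 1:] * p) = reflect_poly p"
        by (simp only: reflect_poly_mult mult_1)
      ultimately have "reflect_poly f dvd p" using pCons by simp
      then show ?thesis using \<open>pCons a p = [:0, 1:] * p\<close> by (metis dvd_mult)
    qed
  qed simp
next
  assume "reflect_poly f dvd y"
  then obtain k where "y = reflect_poly f * k" by blast
  then have "reflect_poly y = f * reflect_poly k" using assms by (simp add: reflect_poly_mult)
  then show "f dvd reflect_poly y" by simp
qed

lemma prime_elem_reflect_poly:
  fixes f :: "'a::field poly"
  assumes "prime_elem f" "coeff f 0 \<noteq> 0"
  shows "prime_elem (reflect_poly f)"
proof -
  have "f \<noteq> 0" "\<not> is_unit f" using assms(1) prime_elem_not_unit by auto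
  then have "\<not> is_unit (reflect_poly f)" "reflect_poly f \<noteq> 0"
    using assms(2) by (auto simp: is_unit_iff_degree)
  moreover have "reflect_poly f dvd a \<or> reflect_poly f dvd b" if "reflect_poly f dvd a * b" for a b
  proof -
    have "f dvd reflect_poly a * reflect_poly b"
      using that dvd_reflect_poly_iff[OF assms(2), of "a * b"] by (simp add: reflect_poly_mult)
    then show ?thesis
      using assms(1) dvd_reflect_poly_iff[OF assms(2)] by (auto simp: prime_elem_dvd_mult_iff)
  qed
  ultimately show ?thesis by (auto simp: prime_elem_def)
qed

lemma reflect_xm1: "m \<ge> 1 \<Longrightarrow> reflect_poly (xm1 m :: 'a::field poly) = - xm1 m"
  by (rule poly_eqI) (auto simp: coeff_reflect_poly degree_xm1 coeff_xm1)

lemma xm1_eq_monom_mult_minus_1: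
  "m \<ge> 1 \<Longrightarrow> xm1 m = [:0, 1::'a::field:] * monom 1 (m - 1) - 1"
  by (cases m) (simp_all add: xm1_def monom_Suc)

lemma prime_factor_xm1_not_dvd_monom:
  fixes f :: "'a::field poly"
  assumes "prime_elem f" "f dvd xm1 m" "m \<ge> 1"
  shows "\<not> f dvd monom 1 k"
proof
  assume "f dvd monom 1 k"
  then have "f dvd [:0, 1:]"
    using assms(1) prime_elem_dvd_power by (auto simp: monom_altdef)
  then have "f dvd [:0, 1:] * monom 1 (m - 1)" by (rule dvd_mult2)
  then have "f dvd xm1 m + 1"
    using assms(3) by (simp add: xm1_eq_monom_mult_minus_1)
  then have "f dvd 1" using assms(2) by (simp add: dvd_add_right_iff)
  then show False using assms(1) prime_elem_not_unit by blast
qed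

lemma prime_factor_xm1_coeff_0:
  fixes f :: "'a::field poly"
  assumes "f dvd xm1 m" "m \<ge> 1"
  shows "coeff f 0 \<noteq> 0"
proof
  assume "coeff f 0 = 0"
  then have "[:0, 1:] dvd f" by (simp add: dvd_iff_poly_eq_0 poly_0_coeff_0)
  then have "poly (xm1 m) 0 = (0::'a)"
    using assms(1) dvd_trans by (auto simp: dvd_iff_poly_eq_0)
  then show False using assms(2) by (simp add: poly_0_coeff_0 coeff_xm1)
qed

lemma prime_factor_xm1_reflect_poly:
  fixes f :: "'a::field poly"
  assumes "prime_elem f" "f dvd xm1 m" "m \<ge> 1"
  shows "prime_elem (reflect_poly f)" "reflect_poly f dvd xm1 m"
proof -
  have "coeff f 0 \<noteq> 0" using assms(2,3) by (rule prime_factor_xm1_coeff_0)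
  then show "prime_elem (reflect_poly f)" by (rule prime_elem_reflect_poly[OF assms(1)])
  have "f dvd reflect_poly (xm1 m)" using assms(2,3) by (simp add: reflect_xm1)
  then show "reflect_poly f dvd xm1 m"
    using dvd_reflect_poly_iff[OF \<open>coeff f 0 \<noteq> 0\<close>] by blast
qed

lemma prime_factor_xm1_dvd_subst_inv_x_iff:
  fixes f :: "'a::field_gcd poly"
  assumes "prime_elem f" "f dvd xm1 m" "m \<ge> 1"
  shows "f dvd subst_inv_x m y \<longleftrightarrow> reflect_poly f dvd y"
proof -
  have "coprime f (monom 1 (degree y))"
    by (rule prime_elem_imp_coprime[OF assms(1) prime_factor_xm1_not_dvd_monom[OF assms]])
  then have "f dvd subst_inv_x m y \<longleftrightarrow> f dvd subst_inv_x m y * monom 1 (degree y)"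
    by (rule coprime_dvd_mult_left_iff[symmetric])
  also have "\<dots> \<longleftrightarrow> f dvd reflect_poly y"
    using subst_inv_x_mult_monom_cong_reflect[OF assms(3)] assms(2)
    by (intro cong_dvd_iff) (rule cong_dvd_modulus)
  also have "\<dots> \<longleftrightarrow> reflect_poly f dvd y"
    using assms(2,3) by (intro dvd_reflect_poly_iff prime_factor_xm1_coeff_0)
  finally show ?thesis .
qed

lemma squarefree_xm1:
  assumes "coprime (card (UNIV :: 'a::{field_gcd,finite} set)) m" "m \<ge> 1"
  shows "squarefree (xm1 m :: 'a poly)"
proof -
  have "(of_nat m :: 'a) \<noteq> 0"
  proof
    assume "(of_nat m :: 'a) = 0"
    then have "CHAR('a) dvd m" by (simp add: of_nat_eq_0_iff_char_dvd)
    then have "CHAR('a) dvd 1" using assms(1) CHAR_dvd_CARD by (metis coprime_common_divisor)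
    then show False by simp
  qed
  have "\<not> p ^ 2 dvd xm1 m" if "prime p" for p :: "'a poly"
  proof
    assume "p ^ 2 dvd xm1 m"
    then obtain k where k: "xm1 m = p * p * k" by (auto simp: power2_eq_square)
    \<comment> \<open>a repeated factor of \<open>x^m - 1\<close> divides its derivative \<open>m x^(m-1)\<close>\<close>
    have "pderiv (xm1 m) = p * (p * pderiv k + 2 * k * pderiv p)"
      unfolding k by (simp add: pderiv_mult algebra_simps)
    moreover have "pderiv (xm1 m :: 'a poly) = smult (of_nat m) (monom 1 (m - 1))"
      by (simp add: xm1_def pderiv_diff pderiv_monom smult_monom)
    ultimately have "p dvd smult (of_nat m) (monom 1 (m - 1))" by simp
    then have "p dvd monom 1 (m - 1)" using \<open>of_nat m \<noteq> 0\<close> by (simp add: dvd_smult_iff)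
    moreover have "p dvd xm1 m" using k by simp
    ultimately show False
      using prime_factor_xm1_not_dvd_monom that assms(2) by blast
  qed
  then show ?thesis by (auto simp: squarefree_factorial_semiring[OF xm1_nonzero[OF assms(2)]])
qed

lemma self_reciprocal_iff_dvd_reflect_poly:
  fixes s :: "'a::field poly"
  assumes "s \<noteq> 0"
  shows "self_reciprocal s \<longleftrightarrow> s dvd reflect_poly s"
proof
  assume "s dvd reflect_poly s"
  then obtain k where k: "reflect_poly s = s * k" by blast
  then have "k \<noteq> 0" using assms by auto
  then have "degree k = 0"
    using degree_reflect_poly_le[of s] k assms by (simp add: degree_mult_eq)
  then obtain \<alpha> where "k = [:\<alpha>:]" by (meson degree_eq_zeroE)
  then show "self_reciprocal s" using k assms by (auto simp: self_reciprocal_def)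
qed (auto simp: self_reciprocal_def dvd_smult)

lemma self_reciprocal_factor_xm1_iff:
  fixes s :: "'a::{field_gcd,finite} poly"
  assumes "coprime (card (UNIV :: 'a set)) m" "m \<ge> 1" "s dvd xm1 m"
  shows "self_reciprocal s \<longleftrightarrow>
    (\<forall>f. prime_elem f \<longrightarrow> f dvd s \<longrightarrow> reflect_poly f dvd s)"
proof -
  have "squarefree s" by (rule squarefree_mono[OF assms(3) squarefree_xm1[OF assms(1,2)]])
  then have "s \<noteq> 0" by auto
  have "self_reciprocal s \<longleftrightarrow> (\<forall>f. prime_elem f \<longrightarrow> f dvd s \<longrightarrow> f dvd reflect_poly s)"
    using self_reciprocal_iff_dvd_reflect_poly[OF \<open>s \<noteq> 0\<close>] squarefree_dvdI[OF \<open>squarefree s\<close>]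
    by (blast intro: dvd_trans)
  also have "\<dots> \<longleftrightarrow> (\<forall>f. prime_elem f \<longrightarrow> f dvd s \<longrightarrow> reflect_poly f dvd s)"
    using assms(2,3) dvd_reflect_poly_iff prime_factor_xm1_coeff_0 dvd_trans by metis
  finally show ?thesis .
qed

lemma gcd_eq_1_iff_no_common_prime_factor:
  fixes a b :: "'a::field_gcd poly"
  assumes "a \<noteq> 0"
  shows "gcd a b = 1 \<longleftrightarrow> (\<forall>f. prime_elem f \<longrightarrow> f dvd a \<longrightarrow> \<not> f dvd b)"
proof
  assume "gcd a b = 1"
  then show "\<forall>f. prime_elem f \<longrightarrow> f dvd a \<longrightarrow> \<not> f dvd b"
    using prime_elem_not_unit by force
next
  assume no_common: "\<forall>f. prime_elem f \<longrightarrow> f dvd a \<longrightarrow> \<not> f dvd b"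
  show "gcd a b = 1"
  proof (rule ccontr)
    assume "gcd a b \<noteq> 1"
    then obtain f where "prime f" "f dvd gcd a b"
      using assms prime_divisor_exists[of "gcd a b"] by auto
    then show False using no_common by auto
  qed
qed

section \<open>The generators of the code\<close>

locale qc_generators =
  fixes m :: nat and g11 g12 g22 g l g22' r22 t22 :: "'a::{field_gcd,finite} poly"
  assumes m_ge_1: "m \<ge> 1"
    and coprime_card_m: "coprime (card (UNIV :: 'a set)) m"
    and g11_dvd_xm1: "g11 dvd xm1 m" and g22_dvd_xm1: "g22 dvd xm1 m"
    and degree_g12: "g12 = 0 \<or> degree g12 < degree g22"
    and g11_g22_dvd: "g11 * g22 dvd xm1 m * g12"
    and g_def: "g = gcd g11 g22"
    and l_def: "l = xm1 m div lcm g11 g22"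
    and g22_eq: "g22 = g * g22'"
    and r22_def: "r22 = gcd g22' (reflect_poly g22')"
    and t22_def: "t22 = g22' div r22"
begin

abbreviation X :: "'a poly" where "X \<equiv> xm1 m"

abbreviation J :: "'a poly \<Rightarrow> 'a poly" where "J \<equiv> subst_inv_x m"

abbreviation S :: "'a poly" where
  "S \<equiv> g11 * transpose_poly m g11 + g12 * transpose_poly m g12"

lemma X_nonzero: "X \<noteq> 0"
  using m_ge_1 by (rule xm1_nonzero)

lemma squarefree_X: "squarefree X"
  using coprime_card_m m_ge_1 by (rule squarefree_xm1)

lemma prime_square_not_dvd: "prime_elem f \<Longrightarrow> s dvd X \<Longrightarrow> \<not> f * f dvd s"
  using squarefreeD[OF squarefree_X, of f] prime_elem_not_unit dvd_trans
  by (auto simp: power2_eq_square)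

lemma prime_factor_reflect_poly:
  assumes "prime_elem f" "f dvd X"
  shows "prime_elem (reflect_poly f)" "reflect_poly f dvd X" "reflect_poly (reflect_poly f) = f"
  using prime_factor_xm1_reflect_poly[OF assms m_ge_1] prime_factor_xm1_coeff_0[OF assms(2) m_ge_1]
  by simp_all

lemma prime_factor_dvd_J_iff: "prime_elem f \<Longrightarrow> f dvd X \<Longrightarrow> f dvd J y \<longleftrightarrow> reflect_poly f dvd y"
  using prime_factor_xm1_dvd_subst_inv_x_iff m_ge_1 by blast

lemma dvd_S_iff:
  assumes "f dvd X"
  shows "f dvd S \<longleftrightarrow> f dvd g11 * J g11 + g12 * J g12"
proof -
  have "degree g11 \<le> m" "degree g22 \<le> m"
    using dvd_imp_degree_le[OF g11_dvd_xm1 X_nonzero] dvd_imp_degree_le[OF g22_dvd_xm1 X_nonzero]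
    by (simp_all add: degree_xm1[OF m_ge_1])
  then have "degree g12 \<le> m" using degree_g12 by auto
  have "[g11 * J g11 + g12 * J g12 = S] (mod X)"
    by (intro cong_add cong_mult cong_refl subst_inv_x_cong_transpose m_ge_1
        \<open>degree g11 \<le> m\<close> \<open>degree g12 \<le> m\<close>)
  then show ?thesis using assms cong_dvd_modulus cong_dvd_iff by blast
qed

lemma g_dvd_X: "g dvd X"
  unfolding g_def using gcd_dvd1 g11_dvd_xm1 by (rule dvd_trans)

lemma g22'_dvd_g22: "g22' dvd g22"
  by (simp add: g22_eq)

lemma X_eq_l_mult_lcm: "X = l * lcm g11 g22"
  using lcm_least[OF g11_dvd_xm1 g22_dvd_xm1] by (simp add: l_def)

lemma l_dvd_X: "l dvd X"
  using X_eq_l_mult_lcm by (metis dvd_triv_left)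

lemma prime_factor_dvd_l_iff:
  assumes "prime_elem f" "f dvd X"
  shows "f dvd l \<longleftrightarrow> \<not> f dvd g11 \<and> \<not> f dvd g22"
proof -
  note X = X_eq_l_mult_lcm
  have "lcm g11 g22 dvd g11 * g22" by (rule lcm_least) simp_all
  then have "f dvd lcm g11 g22 \<longleftrightarrow> f dvd g11 \<or> f dvd g22"
    using assms(1) dvd_lcm1 dvd_lcm2 dvd_trans prime_elem_dvd_mult_iff by blast
  moreover have "\<not> (f dvd l \<and> f dvd lcm g11 g22)"
    using prime_square_not_dvd[OF assms(1), of "X"] X by (auto intro: mult_dvd_mono)
  moreover have "f dvd l \<or> f dvd lcm g11 g22"
    using assms X by (simp add: prime_elem_dvd_mult_iff)
  ultimately show ?thesis by blast
qed

lemma factor_dvd_reflect_poly_iff: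
  "f dvd X \<Longrightarrow> f dvd reflect_poly y \<longleftrightarrow> reflect_poly f dvd y"
  by (rule dvd_reflect_poly_iff[OF prime_factor_xm1_coeff_0[OF _ m_ge_1]])

lemma prime_dvd_g12_if_dvd_g11_g22:
  assumes "prime_elem f" "f dvd g11" "f dvd g22"
  shows "f dvd g12"
proof (rule ccontr)
  assume "\<not> f dvd g12"
  then have "coprime f g12" by (rule prime_elem_imp_coprime[OF assms(1)])
  then have "coprime (f * f) g12" by simp
  moreover have "f * f dvd X * g12"
    using mult_dvd_mono[OF assms(2,3)] g11_g22_dvd by (rule dvd_trans)
  ultimately have "f * f dvd X" using coprime_dvd_mult_left_iff by blast
  with prime_square_not_dvd[OF assms(1) dvd_refl] show False by contradiction
qed

lemma prime_dvd_g22'_iff: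
  assumes "prime_elem f"
  shows "f dvd g22' \<longleftrightarrow> f dvd g22 \<and> \<not> f dvd g"
proof
  assume "f dvd g22'"
  moreover have "\<not> f * f dvd g * g22'"
    using prime_square_not_dvd[OF assms g22_dvd_xm1] g22_eq by simp
  ultimately show "f dvd g22 \<and> \<not> f dvd g" using mult_dvd_mono g22_eq by auto
next
  assume "f dvd g22 \<and> \<not> f dvd g"
  then show "f dvd g22'" using assms by (auto simp: g22_eq prime_elem_dvd_mult_iff)
qed

lemma g22'_eq_r22_mult_t22: "g22' = r22 * t22"
proof -
  have "r22 dvd g22'" by (simp add: r22_def)
  then show ?thesis by (simp add: t22_def)
qed

lemma g22'_dvd_X: "g22' dvd X"
  using g22_dvd_xm1 unfolding g22_eq by (rule dvd_mult_right)

lemma r22_dvd_X: "r22 dvd X" and t22_dvd_X: "t22 dvd X"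
  using g22'_dvd_X unfolding g22'_eq_r22_mult_t22 by (auto intro: dvd_mult_left dvd_mult_right)

lemma r22_nonzero: "r22 \<noteq> 0" and t22_nonzero: "t22 \<noteq> 0"
  using r22_dvd_X t22_dvd_X X_nonzero by auto

lemma prime_factor_dvd_r22_iff:
  "prime_elem f \<Longrightarrow> f dvd X \<Longrightarrow> f dvd r22 \<longleftrightarrow> f dvd g22' \<and> reflect_poly f dvd g22'"
  using factor_dvd_reflect_poly_iff by (simp add: r22_def)

lemma prime_factor_dvd_t22_iff:
  assumes "prime_elem f" "f dvd X"
  shows "f dvd t22 \<longleftrightarrow> f dvd g22' \<and> \<not> reflect_poly f dvd g22'"
proof -
  note g22' = g22'_eq_r22_mult_t22
  have "\<not> f * f dvd r22 * t22" using prime_square_not_dvd[OF assms(1) g22'_dvd_X] g22' by simp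
  then have "\<not> (f dvd r22 \<and> f dvd t22)" using mult_dvd_mono by blast
  moreover have "f dvd g22' \<longleftrightarrow> f dvd r22 \<or> f dvd t22"
    using assms(1) g22' by (simp add: prime_elem_dvd_mult_iff)
  ultimately show ?thesis using prime_factor_dvd_r22_iff[OF assms] by blast
qed

lemma lcd_mod_prime_factor_iff:
  assumes p: "prime_elem p" "p dvd X"
  shows "lcd_mod m g11 g12 g22 p \<longleftrightarrow>
    (p dvd g11 \<and> \<not> p dvd g22 \<longrightarrow> \<not> (reflect_poly p dvd g12 \<and> reflect_poly p dvd g22)) \<and>
    (\<not> p dvd g11 \<and> p dvd g22 \<longrightarrow> \<not> (p dvd S \<and> (p dvd g12 \<or> reflect_poly p dvd g22))) \<and>
    (p dvd l \<longrightarrow> reflect_poly p dvd l)"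
proof -
  note J_iff = prime_factor_dvd_J_iff[OF p]
  consider "p dvd g11" "p dvd g22" | "p dvd g11" "\<not> p dvd g22" | "\<not> p dvd g11" "p dvd g22"
    | "\<not> p dvd g11" "\<not> p dvd g22" by blast
  then show ?thesis
  proof cases
    case 1
    then show ?thesis
      using prime_dvd_g12_if_dvd_g11_g22[OF p(1)] lcd_mod_if_dvd_generators
        prime_factor_dvd_l_iff[OF p] by blast
  next
    case 2
    then show ?thesis
      using lcd_mod_iff_dvd_only_g11[OF p(1)] J_iff prime_factor_dvd_l_iff[OF p] by auto
  next
    case 3
    then show ?thesis
      using lcd_mod_iff_dvd_only_g22[OF p(1)] J_iff prime_factor_dvd_l_iff[OF p] dvd_S_iff[OF p(2)]
      by (auto simp: prime_elem_dvd_mult_iff[OF p(1)])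
  next
    case 4
    then show ?thesis
      using lcd_mod_iff_coprime_generators[OF p(1)] J_iff prime_factor_dvd_l_iff[OF p]
        prime_factor_dvd_l_iff[OF prime_factor_reflect_poly(1,2)[OF p]] by auto
  qed
qed

lemma prime_factor_reflect_dvd_g_if_lcd_mod:
  assumes lcd: "\<forall>p. prime_elem p \<longrightarrow> p dvd X \<longrightarrow> lcd_mod m g11 g12 g22 p"
    and f: "prime_elem f" "f dvd g"
  shows "reflect_poly f dvd g"
proof (rule ccontr)
  define f' where "f' = reflect_poly f"
  have "f dvd X" using f(2) g_dvd_X by (rule dvd_trans)
  then have f': "prime_elem f'" "f' dvd X" "reflect_poly f' = f"
    using prime_factor_reflect_poly[OF f(1)] by (simp_all add: f'_def)
  have f_dvd: "f dvd g11" "f dvd g12" "f dvd g22"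
    using f prime_dvd_g12_if_dvd_g11_g22 by (auto simp: g_def)
  assume "\<not> reflect_poly f dvd g"
  then have "\<not> (f' dvd g11 \<and> f' dvd g22)" by (simp add: f'_def g_def)
  moreover have "f' dvd S"
    using f_dvd by (simp add: dvd_S_iff[OF f'(2)] prime_factor_dvd_J_iff[OF f'(1,2)] f'(3))
  moreover have "\<not> f dvd l" using f_dvd prime_factor_dvd_l_iff[OF f(1) \<open>f dvd X\<close>] by blast
  ultimately show False
    using lcd f' f_dvd lcd_mod_prime_factor_iff[OF f'(1,2)] prime_factor_dvd_l_iff[OF f'(1,2)]
    by auto
qed

lemma prime_factor_reflect_dvd_l_if_lcd_mod:
  assumes "\<forall>p. prime_elem p \<longrightarrow> p dvd X \<longrightarrow> lcd_mod m g11 g12 g22 p"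
    and "prime_elem f" "f dvd l"
  shows "reflect_poly f dvd l"
proof -
  have "f dvd X" using assms(3) l_dvd_X by (rule dvd_trans)
  then show ?thesis using assms lcd_mod_prime_factor_iff by blast
qed

lemma prime_dvd_t22_not_dvd_g12_if_lcd_mod:
  assumes lcd: "\<forall>p. prime_elem p \<longrightarrow> p dvd X \<longrightarrow> lcd_mod m g11 g12 g22 p"
    and f: "prime_elem f" "f dvd t22"
  shows "\<not> f dvd g12"
proof
  define f' where "f' = reflect_poly f"
  have "f dvd X" using f(2) t22_dvd_X by (rule dvd_trans)
  then have f': "prime_elem f'" "f' dvd X" "reflect_poly f' = f"
    using prime_factor_reflect_poly[OF f(1)] by (simp_all add: f'_def)
  have "f dvd g22'" "\<not> f' dvd g22'"
    using f prime_factor_dvd_t22_iff[OF f(1) \<open>f dvd X\<close>] by (simp_all add: f'_def)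
  then have "f dvd g22" "\<not> f dvd g" "\<not> f dvd g11"
    using prime_dvd_g22'_iff[OF f(1)] by (auto simp: g_def)
  have "\<not> f' dvd g"
    using prime_factor_reflect_dvd_g_if_lcd_mod[OF lcd f'(1)] f'(3) \<open>\<not> f dvd g\<close> by auto
  moreover have "\<not> f' dvd l"
    using prime_factor_reflect_dvd_l_if_lcd_mod[OF lcd f'(1)] f'(3) \<open>f dvd g22\<close>
      prime_factor_dvd_l_iff[OF f(1) \<open>f dvd X\<close>] by auto
  ultimately have "f' dvd g11"
    using \<open>\<not> f' dvd g22'\<close> prime_dvd_g22'_iff[OF f'(1)] prime_factor_dvd_l_iff[OF f'(1,2)] by blast
  then have "f dvd J g11" using prime_factor_dvd_J_iff[OF f(1) \<open>f dvd X\<close>] by (simp add: f'_def)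
  moreover assume "f dvd g12"
  ultimately have "f dvd S" by (simp add: dvd_S_iff[OF \<open>f dvd X\<close>])
  then show False
    using lcd f(1) \<open>f dvd X\<close> \<open>f dvd g12\<close> \<open>f dvd g22\<close> \<open>\<not> f dvd g11\<close>
      lcd_mod_prime_factor_iff[OF f(1) \<open>f dvd X\<close>] by blast
qed

lemma prime_dvd_r22_not_dvd_S_if_lcd_mod:
  assumes lcd: "\<forall>p. prime_elem p \<longrightarrow> p dvd X \<longrightarrow> lcd_mod m g11 g12 g22 p"
    and f: "prime_elem f" "f dvd r22"
  shows "\<not> f dvd S"
proof -
  have "f dvd X" using f(2) r22_dvd_X by (rule dvd_trans)
  have "f dvd g22'" "reflect_poly f dvd g22'"
    using f prime_factor_dvd_r22_iff[OF f(1) \<open>f dvd X\<close>] by simp_all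
  then have "f dvd g22" "\<not> f dvd g11" "reflect_poly f dvd g22"
    using prime_dvd_g22'_iff[OF f(1)] g22'_dvd_g22 dvd_trans by (auto simp: g_def)
  then show ?thesis
    using lcd f(1) \<open>f dvd X\<close> lcd_mod_prime_factor_iff[OF f(1) \<open>f dvd X\<close>] by blast
qed

lemma lcd_mod_prime_factor_if_conditions:
  assumes I: "\<forall>f. prime_elem f \<longrightarrow> f dvd g \<longrightarrow> reflect_poly f dvd g"
    and II: "\<forall>f. prime_elem f \<longrightarrow> f dvd l \<longrightarrow> reflect_poly f dvd l"
    and III: "\<forall>f. prime_elem f \<longrightarrow> f dvd t22 \<longrightarrow> \<not> f dvd g12"
    and IV: "\<forall>f. prime_elem f \<longrightarrow> f dvd r22 \<longrightarrow> \<not> f dvd S"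
    and p: "prime_elem p" "p dvd X"
  shows "lcd_mod m g11 g12 g22 p"
proof -
  define p' where "p' = reflect_poly p"
  have p': "prime_elem p'" "p' dvd X" "reflect_poly p' = p"
    using prime_factor_reflect_poly[OF p] by (simp_all add: p'_def)
  have g_iff: "p' dvd g \<longleftrightarrow> p dvd g" using I p p' by (metis p'_def)
  have "\<not> (reflect_poly p dvd g12 \<and> reflect_poly p dvd g22)"
    if "p dvd g11" "\<not> p dvd g22"
  proof
    assume "reflect_poly p dvd g12 \<and> reflect_poly p dvd g22"
    moreover have "\<not> p dvd g" "\<not> p dvd g22'" using that g22'_dvd_g22 dvd_trans by (auto simp: g_def)
    ultimately have "p' dvd g12" "p' dvd t22"
      using g_iff prime_dvd_g22'_iff[OF p'(1)] prime_factor_dvd_t22_iff[OF p'(1,2)] p'(3)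
      by (auto simp: p'_def)
    then show False using III p'(1) by blast
  qed
  moreover have "\<not> (p dvd S \<and> (p dvd g12 \<or> reflect_poly p dvd g22))"
    if "\<not> p dvd g11" "p dvd g22"
  proof -
    have "p dvd g22'" "\<not> p dvd g" using that prime_dvd_g22'_iff[OF p(1)] by (auto simp: g_def)
    show ?thesis
    proof (cases "p' dvd g22'")
      case True
      then have "p dvd r22" using \<open>p dvd g22'\<close> prime_factor_dvd_r22_iff[OF p] by (simp add: p'_def)
      then show ?thesis using IV p(1) by blast
    next
      case False
      then have "p dvd t22" using \<open>p dvd g22'\<close> prime_factor_dvd_t22_iff[OF p] by (simp add: p'_def)
      moreover have "\<not> p' dvd g22"
        using False g_iff \<open>\<not> p dvd g\<close> prime_dvd_g22'_iff[OF p'(1)] by blast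
      ultimately show ?thesis using III p(1) by (auto simp: p'_def)
    qed
  qed
  ultimately show ?thesis
    using II p(1) by (simp add: lcd_mod_prime_factor_iff[OF p])
qed

lemma euclid_LCD_iff:
  "euclid_LCD m (qc_code m g11 g12 g22) \<longleftrightarrow>
    self_reciprocal g \<and> self_reciprocal l \<and> gcd t22 g12 = 1 \<and> gcd r22 S = 1"
proof -
  have "euclid_LCD m (qc_code m g11 g12 g22) \<longleftrightarrow>
      (\<forall>p. prime_elem p \<longrightarrow> p dvd X \<longrightarrow> lcd_mod m g11 g12 g22 p)"
    by (simp add: euclid_LCD_qc_code_iff_lcd_mod[OF m_ge_1]
        lcd_mod_iff_prime_factors[OF squarefree_X])
  moreover note self_reciprocal_factor_xm1_iff[OF coprime_card_m m_ge_1 g_dvd_X]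
    self_reciprocal_factor_xm1_iff[OF coprime_card_m m_ge_1 l_dvd_X]
    gcd_eq_1_iff_no_common_prime_factor[OF t22_nonzero]
    gcd_eq_1_iff_no_common_prime_factor[OF r22_nonzero]
  ultimately show ?thesis
    using prime_factor_reflect_dvd_g_if_lcd_mod prime_factor_reflect_dvd_l_if_lcd_mod
      prime_dvd_t22_not_dvd_g12_if_lcd_mod prime_dvd_r22_not_dvd_S_if_lcd_mod
      lcd_mod_prime_factor_if_conditions
    by (smt (verit))
qed

end

theorem theorem3p1:
  fixes g11 g12 g22 g l g11' g22' r11 t11 r22 t22 :: "'a::{field_gcd,finite} poly"
    and m :: nat
  assumes "m \<ge> 1"
    and "coprime (card (UNIV :: 'a set)) m"
    and "g11 dvd xm1 m" and "g22 dvd xm1 m"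
    and "g12 = 0 \<or> degree g12 < degree g22"
    and "g11 * g22 dvd xm1 m * g12"
    and "g = gcd g11 g22"
    and "l = xm1 m div lcm g11 g22"
    and "g11 = g * g11'" and "g22 = g * g22'"
    and "r11 = gcd g11' (reflect_poly g11')" and "t11 = g11' div r11"
    and "r22 = gcd g22' (reflect_poly g22')" and "t22 = g22' div r22"
  shows "euclid_LCD m (qc_code m g11 g12 g22) \<longleftrightarrow>
           self_reciprocal g \<and> self_reciprocal l \<and> gcd t22 g12 = 1 \<and>
           gcd r22 (g11 * transpose_poly m g11 + g12 * transpose_poly m g12) = 1"
proof -
  interpret qc_generators m g11 g12 g22 g l g22' r22 t22
    by unfold_locales (fact assms)+
  show ?thesis by (rule euclid_LCD_iff)
qed

end
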